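(* Let $\Phi=(G,\varphi)$ be a complex unit gain graph and let $v$ be a vertex lying on a cycle of $G$. (i) If $r(\Phi)=r(G)-2\theta(G)$, then $r(\Phi)=r(\Phi-v)$, $r(G-v)=r(G)-2$ and $\theta(G)=\theta(G-v)+1$. (ii) If $r(\Phi)=r(G)+2\theta(G)$, then $r(\Phi)=r(\Phi-v)+2$, $r(G-v)=r(G)$ and $\theta(G)=\theta(G-v)+1$. (iii) If $r(\Phi)=r(G)-2\theta(G)$ (respectively $r(\Phi)=r(G)+2\theta(G)$), then $r(\Phi-v)=r(G-v)-2\theta(G-v)$ (respectively $r(\Phi-v)=r(G-v)+2\theta(G-v)$), $v$ lies on exactly one cycle of $G$, and $v$ is not a quasi-pendant vertex of $G$.
   Context: A complex unit gain graph $\Phi=(G,\varphi)$ consists of a finite simple graph $G$ with vertex set $\{v_1,\dots,v_n\}$ and a gain function $\varphi$ assigning to each oriented edge $e_{ij}$ ($v_iv_j\in E(G)$) a complex number of modulus $1$ with $\varphi(e_{ji})=\overline{\varphi(e_{ij})}$. $A(\Phi)$ is the Hermitian matrix with $(i,j)$ entry $\varphi(e_{ij})$ if $v_iv_j\in E(G)$ and $0$ otherwise; $r(\Phi)$ is its rank; $r(\cdot)$ of a simple graph is the rank of its $0$-$1$ adjacency matrix. $\Phi-v$ is the induced gain subgraph obtained by deleting $v$ and its incident edges (with underlying graph $G-v$). $\theta(G)=|E(G)|-|V(G)|+\omega(G)$, $\omega(G)$ the number of components. A quasi-pendant vertex is a vertex adjacent to a vertex of degree $1$. *)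

theory Defs
  imports "HOL-Library.Disjoint_Sets" "Jordan_Normal_Form.DL_Rank"
begin

definition simple_graph :: "'a set \<Rightarrow> ('a \<Rightarrow> 'a \<Rightarrow> bool) \<Rightarrow> bool" where
  "simple_graph V E \<longleftrightarrow> finite V \<and> (\<forall>x y. E x y \<longrightarrow> x \<in> V \<and> y \<in> V)
     \<and> (\<forall>x y. E x y \<longrightarrow> E y x) \<and> (\<forall>x. \<not> E x x)"

definition cu_gain_graph :: "'a set \<Rightarrow> ('a \<Rightarrow> 'a \<Rightarrow> bool) \<Rightarrow> ('a \<Rightarrow> 'a \<Rightarrow> complex) \<Rightarrow> bool" where
  "cu_gain_graph V E \<phi> \<longleftrightarrow> simple_graph V E \<and>
     (\<forall>x y. E x y \<longrightarrow> cmod (\<phi> x y) = 1 \<and> \<phi> y x = cnj (\<phi> x y))"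

definition gain_adj_mat :: "'a::linorder set \<Rightarrow> ('a \<Rightarrow> 'a \<Rightarrow> bool) \<Rightarrow> ('a \<Rightarrow> 'a \<Rightarrow> complex) \<Rightarrow> complex mat" where
  "gain_adj_mat V E \<phi> = (let vs = sorted_list_of_set V in
     mat (card V) (card V) (\<lambda>(i,j). if E (vs!i) (vs!j) then \<phi> (vs!i) (vs!j) else 0))"

definition adj_mat :: "'a::linorder set \<Rightarrow> ('a \<Rightarrow> 'a \<Rightarrow> bool) \<Rightarrow> real mat" where
  "adj_mat V E = (let vs = sorted_list_of_set V in
     mat (card V) (card V) (\<lambda>(i,j). if E (vs!i) (vs!j) then 1 else 0))"

definition gain_rank :: "'a::linorder set \<Rightarrow> ('a \<Rightarrow> 'a \<Rightarrow> bool) \<Rightarrow> ('a \<Rightarrow> 'a \<Rightarrow> complex) \<Rightarrow> nat" where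
  "gain_rank V E \<phi> = (vec_space.rank (card V) :: complex mat \<Rightarrow> nat) (gain_adj_mat V E \<phi>)"

definition graph_rank :: "'a::linorder set \<Rightarrow> ('a \<Rightarrow> 'a \<Rightarrow> bool) \<Rightarrow> nat" where
  "graph_rank V E = (vec_space.rank (card V) :: real mat \<Rightarrow> nat) (adj_mat V E)"

definition del_vert_set :: "'a set \<Rightarrow> 'a \<Rightarrow> 'a set" where
  "del_vert_set V v = V - {v}"

definition del_vert_rel :: "('a \<Rightarrow> 'a \<Rightarrow> bool) \<Rightarrow> 'a \<Rightarrow> ('a \<Rightarrow> 'a \<Rightarrow> bool)" where
  "del_vert_rel E v = (\<lambda>x y. E x y \<and> x \<noteq> v \<and> y \<noteq> v)"

definition num_edges :: "('a \<Rightarrow> 'a \<Rightarrow> bool) \<Rightarrow> nat" where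
  "num_edges E = card {{x, y} | x y. E x y}"

definition num_components :: "'a set \<Rightarrow> ('a \<Rightarrow> 'a \<Rightarrow> bool) \<Rightarrow> nat" where
  "num_components V E = card (V // {(x, y). x \<in> V \<and> y \<in> V \<and> E\<^sup>*\<^sup>* x y})"

definition theta :: "'a set \<Rightarrow> ('a \<Rightarrow> 'a \<Rightarrow> bool) \<Rightarrow> int" where
  "theta V E = int (num_edges E) - int (card V) + int (num_components V E)"

definition is_cycle :: "'a set \<Rightarrow> ('a \<Rightarrow> 'a \<Rightarrow> bool) \<Rightarrow> 'a list \<Rightarrow> bool" where
  "is_cycle V E cs \<longleftrightarrow> length cs \<ge> 3 \<and> distinct cs \<and> set cs \<subseteq> V \<and>
     (\<forall>i < length cs. E (cs ! i) (cs ! ((i + 1) mod length cs)))"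

text \<open>The edge set of a cycle; cycles (as subgraphs) are identified by their edge sets.\<close>
definition cycle_edges :: "'a list \<Rightarrow> 'a set set" where
  "cycle_edges cs = {{cs ! i, cs ! ((i + 1) mod length cs)} | i. i < length cs}"

definition on_cycle :: "'a set \<Rightarrow> ('a \<Rightarrow> 'a \<Rightarrow> bool) \<Rightarrow> 'a \<Rightarrow> bool" where
  "on_cycle V E v \<longleftrightarrow> (\<exists>cs. is_cycle V E cs \<and> v \<in> set cs)"

definition on_exactly_one_cycle :: "'a set \<Rightarrow> ('a \<Rightarrow> 'a \<Rightarrow> bool) \<Rightarrow> 'a \<Rightarrow> bool" where
  "on_exactly_one_cycle V E v \<longleftrightarrow>
     card {cycle_edges cs | cs. is_cycle V E cs \<and> v \<in> set cs} = 1"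

definition degree :: "('a \<Rightarrow> 'a \<Rightarrow> bool) \<Rightarrow> 'a \<Rightarrow> nat" where
  "degree E u = card {w. E u w}"

definition quasi_pendant :: "('a \<Rightarrow> 'a \<Rightarrow> bool) \<Rightarrow> 'a \<Rightarrow> bool" where
  "quasi_pendant E v \<longleftrightarrow> (\<exists>u. E v u \<and> degree E u = 1)"

end

theory Submission
  imports Defs
begin

text \<open>For any two matrices with the zero pattern of G, such as the gain matrix of
  (G, phi) and the adjacency matrix of G, their ranks differ by at most 2 theta(G). This follows
  by induction on the number of vertices: some vertex is isolated, or pendant, or has two
  neighbours that stay connected after its deletion (the end of a longest path). Deleting an
  isolated vertex changes nothing, deleting a pendant vertex with its neighbour lowers both ranks
  by exactly 2, and deleting a vertex of the third kind lowers theta by at least 1 while each rank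
  drops by at most 2.

  Suppose the bound is attained and v lies on a cycle. Deleting v lowers theta by at least 1 and
  each rank by at most 2, and the bound still holds in G - v; so theta drops by exactly 1 and the
  ranks behave as claimed. A second cycle through v yields a vertex whose deletion lowers theta
  by 2, and a pendant neighbour u of v lets one delete u and v, lowering both ranks by 2 and theta
  by at least 1; both contradict the bound. Part (ii) is part (i) with the two matrices
  exchanged.\<close>

section \<open>Rank of a block of a matrix\<close>

text \<open>Ranks are measured on arbitrary row and column index sets, as the largest number of
  independent columns, so that deleting a vertex is just a change of index set.\<close>

definition indep_cols :: "('r \<Rightarrow> 'c \<Rightarrow> 'b::field) \<Rightarrow> 'r set \<Rightarrow> 'c set \<Rightarrow> bool" where
  "indep_cols f R J \<longleftrightarrow> (\<forall>c. (\<forall>i\<in>R. (\<Sum>j\<in>J. c j * f i j) = 0) \<longrightarrow> (\<forall>j\<in>J. c j = 0))"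

definition rank_on :: "('r \<Rightarrow> 'c \<Rightarrow> 'b::field) \<Rightarrow> 'r set \<Rightarrow> 'c set \<Rightarrow> nat" where
  "rank_on f R C = Max (card ` {J. J \<subseteq> C \<and> indep_cols f R J})"

lemma indep_cols_empty [simp]: "indep_cols f R {}"
  unfolding indep_cols_def by simp

lemma finite_card_indep_cols: "finite C \<Longrightarrow> finite (card ` {J. J \<subseteq> C \<and> indep_cols f R J})"
  by (rule finite_imageI, rule finite_subset[of _ "Pow C"]) auto

lemma card_le_rank_on: "finite C \<Longrightarrow> J \<subseteq> C \<Longrightarrow> indep_cols f R J \<Longrightarrow> card J \<le> rank_on f R C"
  unfolding rank_on_def by (rule Max_ge[OF finite_card_indep_cols]) auto

lemma rank_on_witness:
  assumes "finite C"
  obtains J where "J \<subseteq> C" "indep_cols f R J" "card J = rank_on f R C"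
proof -
  have "rank_on f R C \<in> card ` {J. J \<subseteq> C \<and> indep_cols f R J}"
    unfolding rank_on_def
    by (rule Max_in[OF finite_card_indep_cols[OF assms]]) (use indep_cols_empty in auto)
  then show ?thesis using that by auto
qed

lemma rank_on_empty [simp]: "rank_on f R {} = 0"
proof -
  have "{J. J \<subseteq> {} \<and> indep_cols f R J} = {{}}" by auto
  then show ?thesis unfolding rank_on_def by simp
qed

lemma indep_cols_subset:
  assumes "indep_cols f R J" "K \<subseteq> J" "finite J"
  shows "indep_cols f R K"
  unfolding indep_cols_def
proof (intro allI impI)
  fix c assume h: "\<forall>i\<in>R. (\<Sum>j\<in>K. c j * f i j) = 0"
  define d where "d = (\<lambda>j. if j \<in> K then c j else 0)"
  have "\<forall>i\<in>R. (\<Sum>j\<in>J. d j * f i j) = 0"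
  proof
    fix i assume "i \<in> R"
    have "(\<Sum>j\<in>J. d j * f i j) = (\<Sum>j\<in>K. d j * f i j)"
      by (rule sum.mono_neutral_right) (use assms in \<open>auto simp: d_def\<close>)
    also have "\<dots> = (\<Sum>j\<in>K. c j * f i j)" by (simp add: d_def)
    finally show "(\<Sum>j\<in>J. d j * f i j) = 0" using h \<open>i\<in>R\<close> by simp
  qed
  then have "\<forall>j\<in>J. d j = 0" using assms(1) unfolding indep_cols_def by blast
  then show "\<forall>j\<in>K. c j = 0" using assms(2) unfolding d_def by (metis subsetD)
qed

lemma indep_cols_mono_rows: "indep_cols f R J \<Longrightarrow> R \<subseteq> R' \<Longrightarrow> indep_cols f R' J"
  unfolding indep_cols_def by blast

lemma rank_on_mono:
  assumes "R \<subseteq> R'" "C \<subseteq> C'" "finite C'"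
  shows "rank_on f R C \<le> rank_on f R' C'"
proof -
  have "finite C" using assms finite_subset by blast
  then obtain J where J: "J \<subseteq> C" "indep_cols f R J" "card J = rank_on f R C"
    by (rule rank_on_witness)
  have "indep_cols f R' J" using J(2) assms(1) by (rule indep_cols_mono_rows)
  then show ?thesis using card_le_rank_on[OF assms(3), of J] J assms(2) by auto
qed

lemma rank_on_cong:
  assumes "\<And>i j. i \<in> R \<Longrightarrow> j \<in> C \<Longrightarrow> f i j = g i j"
  shows "rank_on f R C = rank_on g R C"
proof -
  have "indep_cols f R J = indep_cols g R J" if "J \<subseteq> C" for J
  proof -
    have "(\<Sum>j\<in>J. c j * f i j) = (\<Sum>j\<in>J. c j * g i j)" if "i \<in> R" for c i
      using assms \<open>J \<subseteq> C\<close> that by (intro sum.cong) auto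
    then show ?thesis unfolding indep_cols_def by auto
  qed
  then have "{J. J \<subseteq> C \<and> indep_cols f R J} = {J. J \<subseteq> C \<and> indep_cols g R J}" by blast
  then show ?thesis unfolding rank_on_def by simp
qed

lemma rank_on_delete_col:
  assumes "finite C"
  shows "rank_on f R C \<le> rank_on f R (C - {p}) + 1"
proof -
  obtain J where J: "J \<subseteq> C" "indep_cols f R J" "card J = rank_on f R C"
    using rank_on_witness[OF assms] .
  have "finite J" using J assms finite_subset by blast
  then have "indep_cols f R (J - {p})" using indep_cols_subset[OF J(2)] by blast
  then have "card (J - {p}) \<le> rank_on f R (C - {p})"
    using card_le_rank_on[of "C - {p}" "J - {p}"] J assms by auto
  moreover have "card J \<le> card (J - {p}) + 1"
    by (auto simp: card_Diff_singleton_if)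
  ultimately show ?thesis using J by linarith
qed

lemma rank_on_zero_col:
  fixes f :: "'r \<Rightarrow> 'c \<Rightarrow> 'b::field"
  assumes "finite C" "\<And>i. i \<in> R \<Longrightarrow> f i p = 0"
  shows "rank_on f R C = rank_on f R (C - {p})"
proof (rule antisym)
  show "rank_on f R (C - {p}) \<le> rank_on f R C" by (rule rank_on_mono) (use assms in auto)
  obtain J where J: "J \<subseteq> C" "indep_cols f R J" "card J = rank_on f R C"
    using rank_on_witness[OF assms(1)] .
  have "p \<notin> J"
  proof
    assume "p \<in> J"
    define c where "c = (\<lambda>j. if j = p then (1::'b) else 0)"
    have "finite J" using J(1) assms(1) finite_subset by blast
    have "(\<Sum>j\<in>J. c j * f i j) = f i p" for i
    proof -
      have "(\<Sum>j\<in>J. c j * f i j) = (\<Sum>j\<in>J. if j = p then f i p else 0)"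
        by (rule sum.cong) (auto simp: c_def)
      then show ?thesis using \<open>p \<in> J\<close> \<open>finite J\<close> by simp
    qed
    then have "\<forall>i\<in>R. (\<Sum>j\<in>J. c j * f i j) = 0" using assms(2) by simp
    then have "c p = 0" using J(2) \<open>p \<in> J\<close> unfolding indep_cols_def by blast
    then show False by (simp add: c_def)
  qed
  then show "rank_on f R C \<le> rank_on f R (C - {p})"
    using card_le_rank_on[of "C - {p}" J f R] J assms by auto
qed

lemma rank_on_zero_row:
  assumes "\<And>j. j \<in> C \<Longrightarrow> f p j = 0"
  shows "rank_on f R C = rank_on f (R - {p}) C"
proof -
  have "indep_cols f R J = indep_cols f (R - {p}) J" if "J \<subseteq> C" for J
  proof -
    have "(\<Sum>j\<in>J. c j * f p j) = 0" for c using that assms by (intro sum.neutral) auto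
    then show ?thesis unfolding indep_cols_def by (metis Diff_iff singletonD)
  qed
  then have "{J. J \<subseteq> C \<and> indep_cols f R J} = {J. J \<subseteq> C \<and> indep_cols f (R - {p}) J}" by blast
  then show ?thesis unfolding rank_on_def by simp
qed

text \<open>Deleting a row loses at most one independent column: if the columns J become dependent
  without row p, the dependency is non-zero in row p, and subtracting a multiple of it removes one
  column j0 that it involves.\<close>

lemma indep_cols_delete_row:
  assumes indep: "indep_cols f R J" and fin: "finite J"
    and dep: "\<forall>i\<in>R - {p}. (\<Sum>j\<in>J. c j * f i j) = 0" and j0: "j0 \<in> J" "c j0 \<noteq> 0"
  shows "indep_cols f (R - {p}) (J - {j0})"
  unfolding indep_cols_def
proof (intro allI impI)
  define \<beta> where "\<beta> = (\<Sum>j\<in>J. c j * f p j)"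
  have "\<not> (\<forall>i\<in>R. (\<Sum>j\<in>J. c j * f i j) = 0)" using indep j0 unfolding indep_cols_def by blast
  then have \<beta>: "\<beta> \<noteq> 0" using dep unfolding \<beta>_def by auto
  fix d assume hd: "\<forall>i\<in>R - {p}. (\<Sum>j\<in>J - {j0}. d j * f i j) = 0"
  define d' where "d' = (\<lambda>j. if j = j0 then 0 else d j)"
  have sd: "(\<Sum>j\<in>J. d' j * f i j) = (\<Sum>j\<in>J - {j0}. d j * f i j)" for i
    using fin j0(1) by (simp add: sum.remove d'_def)
  define \<alpha> where "\<alpha> = (\<Sum>j\<in>J. d' j * f p j)"
  define e where "e = (\<lambda>j. d' j - (\<alpha> / \<beta>) * c j)"
  have se: "(\<Sum>j\<in>J. e j * f i j) = (\<Sum>j\<in>J. d' j * f i j) - (\<alpha> / \<beta>) * (\<Sum>j\<in>J. c j * f i j)"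
    for i unfolding e_def by (simp add: algebra_simps sum_subtractf sum_distrib_left)
  have "\<forall>i\<in>R. (\<Sum>j\<in>J. e j * f i j) = 0"
  proof
    fix i assume "i \<in> R"
    show "(\<Sum>j\<in>J. e j * f i j) = 0"
    proof (cases "i = p")
      case True
      then show ?thesis using se[of p] \<beta> unfolding \<alpha>_def \<beta>_def by simp
    next
      case False
      then show ?thesis using se[of i] sd[of i] hd dep \<open>i \<in> R\<close> by simp
    qed
  qed
  then have e0: "\<forall>j\<in>J. e j = 0" using indep unfolding indep_cols_def by blast
  then have "e j0 = 0" using j0(1) by blast
  then have "\<alpha> = 0" using j0(2) \<beta> by (simp add: e_def d'_def)
  show "\<forall>j\<in>J - {j0}. d j = 0"
  proof
    fix j assume j: "j \<in> J - {j0}"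
    then have "e j = 0" using e0 by blast
    then show "d j = 0" using j \<open>\<alpha> = 0\<close> by (simp add: e_def d'_def)
  qed
qed

lemma rank_on_delete_row:
  fixes f :: "'r \<Rightarrow> 'c \<Rightarrow> 'b::field"
  assumes "finite C"
  shows "rank_on f R C \<le> rank_on f (R - {p}) C + 1"
proof -
  obtain J where J: "J \<subseteq> C" "indep_cols f R J" "card J = rank_on f R C"
    using rank_on_witness[OF assms] .
  have fJ: "finite J" using J assms finite_subset by blast
  show ?thesis
  proof (cases "indep_cols f (R - {p}) J")
    case True
    then show ?thesis using card_le_rank_on[OF assms J(1) True] J by simp
  next
    case False
    then obtain c j0 where c: "\<forall>i\<in>R - {p}. (\<Sum>j\<in>J. c j * f i j) = 0" "j0 \<in> J" "c j0 \<noteq> 0"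
      unfolding indep_cols_def by blast
    have "card (J - {j0}) \<le> rank_on f (R - {p}) C"
      using card_le_rank_on[OF assms, of "J - {j0}"] indep_cols_delete_row[OF J(2) fJ c] J(1)
      by auto
    moreover have "card J = card (J - {j0}) + 1" using card.remove[OF fJ c(2)] by simp
    ultimately show ?thesis using J by linarith
  qed
qed

lemma rank_on_remove_bounds:
  fixes f :: "'r \<Rightarrow> 'r \<Rightarrow> 'b::field"
  assumes "finite V" "x \<in> V"
  shows "rank_on f (V - {x}) (V - {x}) \<le> rank_on f V V"
    and "rank_on f V V \<le> rank_on f (V - {x}) (V - {x}) + 2"
proof -
  show "rank_on f (V - {x}) (V - {x}) \<le> rank_on f V V" by (rule rank_on_mono) (use assms in auto)
  have "rank_on f V V \<le> rank_on f (V - {x}) V + 1" by (rule rank_on_delete_row) (use assms in auto)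
  also have "rank_on f (V - {x}) V \<le> rank_on f (V - {x}) (V - {x}) + 1"
    by (rule rank_on_delete_col) (use assms in auto)
  finally show "rank_on f V V \<le> rank_on f (V - {x}) (V - {x}) + 2" by simp
qed

lemma rank_on_remove_pair_ge:
  fixes f :: "'r \<Rightarrow> 'r \<Rightarrow> 'b::field"
  assumes "finite C" "u \<noteq> w" "u \<in> R" "w \<in> R" "u \<in> C" "w \<in> C"
    and row_u: "\<And>j. j \<in> C \<Longrightarrow> j \<noteq> w \<Longrightarrow> f u j = 0"
    and col_u: "\<And>i. i \<in> R \<Longrightarrow> i \<noteq> w \<Longrightarrow> f i u = 0"
    and "f u w \<noteq> 0" "f w u \<noteq> 0"
  shows "rank_on f (R - {u} - {w}) (C - {u} - {w}) + 2 \<le> rank_on f R C"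
proof -
  have fC: "finite (C - {u} - {w})" using assms by simp
  obtain J where J: "J \<subseteq> C - {u} - {w}" "indep_cols f (R - {u} - {w}) J"
    "card J = rank_on f (R - {u} - {w}) (C - {u} - {w})" using rank_on_witness[OF fC] .
  have fJ: "finite J" using J fC finite_subset by blast
  have uJ: "u \<notin> J" "w \<notin> J" using J(1) by auto
  let ?K = "insert u (insert w J)"
  have "indep_cols f R ?K"
    unfolding indep_cols_def
  proof (intro allI impI)
    fix c assume h: "\<forall>i\<in>R. (\<Sum>j\<in>?K. c j * f i j) = 0"
    have split: "(\<Sum>j\<in>?K. c j * f i j) = c u * f i u + c w * f i w + (\<Sum>j\<in>J. c j * f i j)" for i
      using uJ fJ assms(2) by (simp add: algebra_simps)
    have "(\<Sum>j\<in>J. c j * f u j) = 0" using J(1) row_u by (intro sum.neutral) auto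
    then have "c w * f u w = 0"
      using h[rule_format, OF assms(3)] split[of u] row_u[OF assms(5) assms(2)] by simp
    then have cw: "c w = 0" using assms(9) by simp
    have "\<forall>i\<in>R - {u} - {w}. (\<Sum>j\<in>J. c j * f i j) = 0"
      using h split col_u cw by auto
    then have cJ: "\<forall>j\<in>J. c j = 0" using J(2) unfolding indep_cols_def by blast
    then have "c u * f w u = 0" using h[rule_format, OF assms(4)] split[of w] cw by simp
    then have "c u = 0" using assms(10) by simp
    then show "\<forall>j\<in>?K. c j = 0" using cw cJ by auto
  qed
  moreover have "?K \<subseteq> C" using J(1) assms by auto
  ultimately have "card ?K \<le> rank_on f R C" using card_le_rank_on[OF assms(1)] by blast
  moreover have "card ?K = card J + 2" using fJ uJ assms(2) by simp
  ultimately show ?thesis using J by linarith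
qed

lemma indep_cols_reindex:
  assumes h: "inj_on h C'" and J: "J' \<subseteq> C'" and g: "g ` R' = R"
  shows "indep_cols (\<lambda>i j. f (g i) (h j)) R' J' = indep_cols f R (h ` J')"
proof -
  have injJ: "inj_on h J'" using h J inj_on_subset by blast
  have sr: "(\<Sum>j\<in>h ` J'. c j * f i j) = (\<Sum>j\<in>J'. c (h j) * f i (h j))" for c i
    using sum.reindex[OF injJ] by simp
  show ?thesis
  proof
    assume ind: "indep_cols (\<lambda>i j. f (g i) (h j)) R' J'"
    show "indep_cols f R (h ` J')" unfolding indep_cols_def
    proof (intro allI impI)
      fix c assume hc: "\<forall>i\<in>R. (\<Sum>j\<in>h ` J'. c j * f i j) = 0"
      have "\<forall>i\<in>R'. (\<Sum>j\<in>J'. (c \<circ> h) j * f (g i) (h j)) = 0" using hc sr g by auto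
      then have "\<forall>j\<in>J'. (c \<circ> h) j = 0" using ind unfolding indep_cols_def by blast
      then show "\<forall>j\<in>h ` J'. c j = 0" by auto
    qed
  next
    assume ind: "indep_cols f R (h ` J')"
    show "indep_cols (\<lambda>i j. f (g i) (h j)) R' J'" unfolding indep_cols_def
    proof (intro allI impI)
      fix c assume hc: "\<forall>i\<in>R'. (\<Sum>j\<in>J'. c j * f (g i) (h j)) = 0"
      define c' where "c' = (\<lambda>j. c (the_inv_into J' h j))"
      have c'h: "\<And>j. j \<in> J' \<Longrightarrow> c' (h j) = c j"
        unfolding c'_def by (simp add: the_inv_into_f_f[OF injJ])
      have "\<forall>i\<in>R. (\<Sum>j\<in>h ` J'. c' j * f i j) = 0"
      proof
        fix i assume "i \<in> R"
        then obtain i' where "i' \<in> R'" "i = g i'" using g by blast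
        then show "(\<Sum>j\<in>h ` J'. c' j * f i j) = 0" using hc sr[of c' i] c'h by simp
      qed
      then have "\<forall>j\<in>h ` J'. c' j = 0" using ind unfolding indep_cols_def by blast
      then show "\<forall>j\<in>J'. c j = 0" using c'h by auto
    qed
  qed
qed

lemma rank_on_reindex:
  assumes h: "bij_betw h C' C" and g: "g ` R' = R"
  shows "rank_on (\<lambda>i j. f (g i) (h j)) R' C' = rank_on f R C"
proof -
  let ?f' = "\<lambda>i j. f (g i) (h j)"
  have hi: "inj_on h C'" and hC: "h ` C' = C" using h by (auto simp: bij_betw_def)
  have "{J. J \<subseteq> C \<and> indep_cols f R J} = (\<lambda>J. h ` J) ` {J'. J' \<subseteq> C' \<and> indep_cols ?f' R' J'}"
  proof (intro equalityI subsetI)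
    fix J assume "J \<in> {J. J \<subseteq> C \<and> indep_cols f R J}"
    then have J: "J \<subseteq> C" "indep_cols f R J" by auto
    let ?J' = "C' \<inter> h -` J"
    have "h ` ?J' = J" using J(1) hC by auto
    then show "J \<in> (\<lambda>J. h ` J) ` {J'. J' \<subseteq> C' \<and> indep_cols ?f' R' J'}"
      using indep_cols_reindex[OF hi _ g, of ?J' f] J(2) by auto
  next
    fix J assume "J \<in> (\<lambda>J. h ` J) ` {J'. J' \<subseteq> C' \<and> indep_cols ?f' R' J'}"
    then obtain J' where "J = h ` J'" "J' \<subseteq> C'" "indep_cols ?f' R' J'" by auto
    then show "J \<in> {J. J \<subseteq> C \<and> indep_cols f R J}" using indep_cols_reindex[OF hi _ g, of J' f] hC by auto
  qed
  then have "card ` {J. J \<subseteq> C \<and> indep_cols f R J}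
      = (\<lambda>J. card (h ` J)) ` {J'. J' \<subseteq> C' \<and> indep_cols ?f' R' J'}"
    by (simp add: image_image)
  also have "\<dots> = card ` {J'. J' \<subseteq> C' \<and> indep_cols ?f' R' J'}"
    by (intro image_cong refl card_image) (use hi inj_on_subset in blast)
  finally show ?thesis unfolding rank_on_def by simp
qed

section \<open>Agreement with the rank of JNF matrices\<close>

lemma sorted_list_of_set_nth_image:
  assumes "finite J"
  shows "(\<lambda>l. sorted_list_of_set J ! l) ` {..<card J} = J"
proof -
  have "set (sorted_list_of_set J)
      = (\<lambda>l. sorted_list_of_set J ! l) ` {..<length (sorted_list_of_set J)}"
    by (auto simp: set_conv_nth)
  then show ?thesis using assms by simp
qed

lemma bij_betw_sorted_list_of_set_nth:
  "finite J \<Longrightarrow> bij_betw (\<lambda>l. sorted_list_of_set J ! l) {..<card J} J"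
  unfolding bij_betw_def using sorted_list_of_set_nth_image
  by (metis distinct_sorted_list_of_set inj_on_nth length_sorted_list_of_set lessThan_iff)

definition col_submat :: "nat \<Rightarrow> 'b mat \<Rightarrow> nat set \<Rightarrow> 'b mat" where
  "col_submat n A J = mat n (card J) (\<lambda>(i,l). A $$ (i, sorted_list_of_set J ! l))"

lemma col_submat_carrier: "col_submat n A J \<in> carrier_mat n (card J)"
  unfolding col_submat_def by simp

lemma col_col_submat:
  assumes A: "A \<in> carrier_mat n nc" and J: "J \<subseteq> {..<nc}" and l: "l < card J"
  shows "col (col_submat n A J) l = col A (sorted_list_of_set J ! l)"
proof -
  have "finite J" using J finite_subset by blast
  then have "sorted_list_of_set J ! l \<in> J" using l
    by (metis length_sorted_list_of_set nth_mem set_sorted_list_of_set)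
  then have "sorted_list_of_set J ! l < nc" using J by auto
  then show ?thesis using A l unfolding col_submat_def by (intro eq_vecI) auto
qed

lemma cols_col_submat:
  assumes A: "A \<in> carrier_mat n nc" and J: "J \<subseteq> {..<nc}"
  shows "cols (col_submat n A J) = map (col A) (sorted_list_of_set J)"
proof -
  have "finite J" using J finite_subset by blast
  then show ?thesis using col_col_submat[OF A J] col_submat_carrier[of n A J]
    by (intro nth_equalityI) auto
qed

lemma col_submat_mult_vec:
  fixes A :: "'b::field mat"
  assumes A: "A \<in> carrier_mat n nc" and J: "J \<subseteq> {..<nc}" and i: "i < n"
    and v: "v \<in> carrier_vec (card J)"
  shows "(col_submat n A J *\<^sub>v v) $ i =
     (\<Sum>j\<in>J. v $ (the_inv_into {..<card J} (\<lambda>l. sorted_list_of_set J ! l) j) * A $$ (i, j))"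
proof -
  let ?h = "\<lambda>l. sorted_list_of_set J ! l"
  have "finite J" using J finite_subset by blast
  then have bij: "bij_betw ?h {..<card J} J" by (rule bij_betw_sorted_list_of_set_nth)
  then have inj: "inj_on ?h {..<card J}" by (rule bij_betw_imp_inj_on)
  have "(col_submat n A J *\<^sub>v v) $ i = (\<Sum>l<card J. A $$ (i, ?h l) * v $ l)"
    using i v unfolding col_submat_def by (simp add: scalar_prod_def row_def atLeast0LessThan)
  also have "\<dots> = (\<Sum>l<card J. v $ (the_inv_into {..<card J} ?h (?h l)) * A $$ (i, ?h l))"
    by (rule sum.cong) (auto simp: the_inv_into_f_f[OF inj] mult.commute)
  also have "\<dots> = (\<Sum>j\<in>J. v $ (the_inv_into {..<card J} ?h j) * A $$ (i, j))"
    using sum.reindex_bij_betw[OF bij, of "\<lambda>j. v $ (the_inv_into {..<card J} ?h j) * A $$ (i, j)"]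
    by simp
  finally show ?thesis .
qed

lemma set_cols_col_submat:
  assumes "A \<in> carrier_mat n nc" "J \<subseteq> {..<nc}"
  shows "set (cols (col_submat n A J)) = col A ` J"
proof -
  have "finite J" using assms(2) finite_subset by blast
  then show ?thesis using cols_col_submat[OF assms] by simp
qed

lemma distinct_cols_col_submat:
  assumes "A \<in> carrier_mat n nc" "J \<subseteq> {..<nc}" "inj_on (col A) J"
  shows "distinct (cols (col_submat n A J))"
proof -
  have "finite J" using assms(2) finite_subset by blast
  then show ?thesis using cols_col_submat[OF assms(1,2)] assms(3) by (simp add: distinct_map)
qed

lemma inj_on_col_if_indep_cols:
  assumes A: "A \<in> carrier_mat n nc" and J: "J \<subseteq> {..<nc}"
    and ind: "indep_cols (\<lambda>i j. A $$ (i, j)) {..<n} J"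
  shows "inj_on (col A) J"
proof
  fix a b assume ab: "a \<in> J" "b \<in> J" "col A a = col A b"
  show "a = b"
  proof (rule ccontr)
    assume ne: "a \<noteq> b"
    have fJ: "finite J" using J finite_subset by blast
    define c where "c = (\<lambda>j. if j = a then (1::'a) else if j = b then -1 else 0)"
    have "(\<Sum>j\<in>J. c j * A $$ (i, j)) = 0" if i: "i < n" for i
    proof -
      have "A $$ (i, a) = A $$ (i, b)"
        using ab i A J by (metis (no_types, lifting) carrier_matD col_def index_vec lessThan_iff subsetD)
      moreover have "(\<Sum>j\<in>J. c j * A $$ (i, j))
          = (\<Sum>j\<in>J. (if j = a then A $$ (i,a) else 0) + (if j = b then - A $$ (i,b) else 0))"
        by (rule sum.cong) (auto simp: c_def ne)
      ultimately show ?thesis using ab fJ by (simp add: sum.distrib)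
    qed
    then have "c a = 0" using ind ab unfolding indep_cols_def by blast
    then show False by (simp add: c_def)
  qed
qed

context vec_space
begin

lemma lin_indpt_if_indep_cols:
  assumes A: "A \<in> carrier_mat n nc" and J: "J \<subseteq> {..<nc}"
    and ind: "indep_cols (\<lambda>i j. A $$ (i, j)) {..<n} J"
  shows "lin_indpt (col A ` J)"
proof
  let ?h = "\<lambda>l. sorted_list_of_set J ! l"
  have "finite J" using J finite_subset by blast
  then have bij: "bij_betw ?h {..<card J} J" by (rule bij_betw_sorted_list_of_set_nth)
  assume "lin_dep (col A ` J)"
  then obtain v where v: "v \<in> carrier_vec (card J)" "v \<noteq> 0\<^sub>v (card J)" "col_submat n A J *\<^sub>v v = 0\<^sub>v n"
    using lin_depE[OF col_submat_carrier _ distinct_cols_col_submat[OF A J inj_on_col_if_indep_cols[OF A J ind]]]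
      set_cols_col_submat[OF A J] by metis
  define c where "c = (\<lambda>j. v $ (the_inv_into {..<card J} ?h j))"
  have "\<forall>i\<in>{..<n}. (\<Sum>j\<in>J. c j * A $$ (i, j)) = 0"
    using col_submat_mult_vec[OF A J _ v(1)] v(3) unfolding c_def by (metis index_zero_vec(1) lessThan_iff)
  then have c0: "\<forall>j\<in>J. c j = 0" using ind unfolding indep_cols_def by blast
  have "v = 0\<^sub>v (card J)"
  proof (rule eq_vecI)
    fix l assume "l < dim_vec (0\<^sub>v (card J) :: 'a vec)"
    then have l: "l < card J" by simp
    then have "c (?h l) = 0" using c0 bij bij_betwE by blast
    then show "v $ l = 0\<^sub>v (card J) $ l"
      using l bij unfolding c_def by (simp add: the_inv_into_f_f bij_betw_imp_inj_on)
  qed (use v in auto)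
  then show False using v by simp
qed

lemma indep_cols_if_lin_indpt:
  assumes A: "A \<in> carrier_mat n nc" and J: "J \<subseteq> {..<nc}"
    and inj: "inj_on (col A) J" and li: "lin_indpt (col A ` J)"
  shows "indep_cols (\<lambda>i j. A $$ (i, j)) {..<n} J"
  unfolding indep_cols_def
proof (intro allI impI ballI)
  let ?h = "\<lambda>l. sorted_list_of_set J ! l"
  have "finite J" using J finite_subset by blast
  then have bij: "bij_betw ?h {..<card J} J" by (rule bij_betw_sorted_list_of_set_nth)
  fix c j0 assume h: "\<forall>i\<in>{..<n}. (\<Sum>j\<in>J. c j * A $$ (i, j)) = 0" and j0: "j0 \<in> J"
  define v where "v = vec (card J) (\<lambda>l. c (?h l))"
  have v: "v \<in> carrier_vec (card J)" unfolding v_def by simp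
  have "col_submat n A J *\<^sub>v v = 0\<^sub>v n"
  proof (rule eq_vecI)
    fix i assume "i < dim_vec (0\<^sub>v n :: 'a vec)"
    then have i: "i < n" by simp
    have "(col_submat n A J *\<^sub>v v) $ i = (\<Sum>j\<in>J. v $ (the_inv_into {..<card J} ?h j) * A $$ (i, j))"
      by (rule col_submat_mult_vec[OF A J i v])
    also have "\<dots> = (\<Sum>j\<in>J. c j * A $$ (i, j))"
    proof (rule sum.cong)
      fix j assume "j \<in> J"
      then obtain l where l: "l < card J" "j = ?h l" using bij by (force simp: bij_betw_def)
      then show "v $ (the_inv_into {..<card J} ?h j) * A $$ (i, j) = c j * A $$ (i, j)"
        using bij by (simp add: the_inv_into_f_f bij_betw_imp_inj_on v_def)
    qed simp
    finally show "(col_submat n A J *\<^sub>v v) $ i = 0\<^sub>v n $ i" using h i by simp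
  qed (simp add: col_submat_def)
  then have "v = 0\<^sub>v (card J)"
    using lin_depI[OF col_submat_carrier v _ _ distinct_cols_col_submat[OF A J inj]] li
      set_cols_col_submat[OF A J] by metis
  moreover obtain l where l: "l < card J" "j0 = ?h l" using bij j0 by (force simp: bij_betw_def)
  ultimately show "c j0 = 0" unfolding v_def by (metis index_vec index_zero_vec(1))
qed

lemma rank_eq_rank_on:
  assumes A: "A \<in> carrier_mat n nc"
  shows "rank A = rank_on (\<lambda>i j. A $$ (i, j)) {..<n} {..<nc}"
proof (rule antisym)
  have "lin_indpt {}"
    by (metis (no_types) empty_subsetI fin_dim finite_basis_exists subset_li_is_li vec_vs vectorspace.basis_def)
  then obtain S where S: "finite S" "maximal S (\<lambda>T. T \<subseteq> set (cols A) \<and> lin_indpt T)"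
    using maximal_exists_superset[of "set (cols A)" "\<lambda>T. T \<subseteq> set (cols A) \<and> lin_indpt T" "{}"]
    by auto
  have S_cols: "S \<subseteq> set (cols A)" "lin_indpt S" using S(2) unfolding maximal_def by auto
  have "\<exists>j. j < nc \<and> col A j = s" if "s \<in> S" for s
    using that S_cols A by (fastforce simp: cols_def)
  then obtain ch where ch: "\<And>s. s \<in> S \<Longrightarrow> ch s < nc \<and> col A (ch s) = s" by metis
  define J where "J = ch ` S"
  have J: "J \<subseteq> {..<nc}" "col A ` J = S" "inj_on (col A) J"
    unfolding J_def using ch by (auto simp: image_image intro: inj_onI)
  have "rank A = card J" using rank_card_indpt[OF A S(2)] J(2) card_image[OF J(3)] by simp
  also have "card J \<le> rank_on (\<lambda>i j. A $$ (i, j)) {..<n} {..<nc}"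
    using J S_cols by (intro card_le_rank_on indep_cols_if_lin_indpt[OF A]) auto
  finally show "rank A \<le> rank_on (\<lambda>i j. A $$ (i, j)) {..<n} {..<nc}" .
next
  obtain J where J: "J \<subseteq> {..<nc}" "indep_cols (\<lambda>i j. A $$ (i, j)) {..<n} J"
    "card J = rank_on (\<lambda>i j. A $$ (i, j)) {..<n} {..<nc}"
    using rank_on_witness[of "{..<nc}"] by blast
  have "col A ` J \<subseteq> set (cols A)" using J(1) A by (auto simp: cols_def)
  then have "card (col A ` J) \<le> rank A"
    using rank_ge_card_indpt[OF A] lin_indpt_if_indep_cols[OF A J(1,2)] by blast
  then show "rank_on (\<lambda>i j. A $$ (i, j)) {..<n} {..<nc} \<le> rank A"
    using J inj_on_col_if_indep_cols[OF A J(1,2)] by (simp add: card_image)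
qed

end

section \<open>Gain and adjacency matrices\<close>

definition gain_entry :: "('a \<Rightarrow> 'a \<Rightarrow> bool) \<Rightarrow> ('a \<Rightarrow> 'a \<Rightarrow> complex) \<Rightarrow> 'a \<Rightarrow> 'a \<Rightarrow> complex" where
  "gain_entry E \<phi> x y = (if E x y then \<phi> x y else 0)"

definition adj_entry :: "('a \<Rightarrow> 'a \<Rightarrow> bool) \<Rightarrow> 'a \<Rightarrow> 'a \<Rightarrow> real" where
  "adj_entry E x y = (if E x y then 1 else 0)"

lemma gain_rank_eq_rank_on:
  assumes "finite V"
  shows "gain_rank V E \<phi> = rank_on (gain_entry E \<phi>) V V"
proof -
  let ?h = "\<lambda>l. sorted_list_of_set V ! l"
  have "gain_rank V E \<phi> = rank_on (\<lambda>i j. gain_adj_mat V E \<phi> $$ (i, j)) {..<card V} {..<card V}"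
    unfolding gain_rank_def by (rule vec_space.rank_eq_rank_on) (simp add: gain_adj_mat_def Let_def)
  also have "\<dots> = rank_on (\<lambda>i j. gain_entry E \<phi> (?h i) (?h j)) {..<card V} {..<card V}"
    by (rule rank_on_cong) (simp add: gain_adj_mat_def Let_def gain_entry_def)
  also have "\<dots> = rank_on (gain_entry E \<phi>) V V"
    using bij_betw_sorted_list_of_set_nth[OF assms] sorted_list_of_set_nth_image[OF assms]
    by (rule rank_on_reindex)
  finally show ?thesis .
qed

lemma graph_rank_eq_rank_on:
  assumes "finite V"
  shows "graph_rank V E = rank_on (adj_entry E) V V"
proof -
  let ?h = "\<lambda>l. sorted_list_of_set V ! l"
  have "graph_rank V E = rank_on (\<lambda>i j. adj_mat V E $$ (i, j)) {..<card V} {..<card V}"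
    unfolding graph_rank_def by (rule vec_space.rank_eq_rank_on) (simp add: adj_mat_def Let_def)
  also have "\<dots> = rank_on (\<lambda>i j. adj_entry E (?h i) (?h j)) {..<card V} {..<card V}"
    by (rule rank_on_cong) (simp add: adj_mat_def Let_def adj_entry_def)
  also have "\<dots> = rank_on (adj_entry E) V V"
    using bij_betw_sorted_list_of_set_nth[OF assms] sorted_list_of_set_nth_image[OF assms]
    by (rule rank_on_reindex)
  finally show ?thesis .
qed

lemma gain_rank_del_vert:
  assumes "finite V"
  shows "gain_rank (del_vert_set V v) (del_vert_rel E v) \<phi> = rank_on (gain_entry E \<phi>) (V - {v}) (V - {v})"
  unfolding del_vert_set_def gain_rank_eq_rank_on[OF finite_Diff[OF assms]]
  by (rule rank_on_cong) (auto simp: gain_entry_def del_vert_rel_def)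

lemma graph_rank_del_vert:
  assumes "finite V"
  shows "graph_rank (del_vert_set V v) (del_vert_rel E v) = rank_on (adj_entry E) (V - {v}) (V - {v})"
  unfolding del_vert_set_def graph_rank_eq_rank_on[OF finite_Diff[OF assms]]
  by (rule rank_on_cong) (auto simp: adj_entry_def del_vert_rel_def)

definition supported_on :: "'a set \<Rightarrow> ('a \<Rightarrow> 'a \<Rightarrow> bool) \<Rightarrow> ('a \<Rightarrow> 'a \<Rightarrow> 'b::field) \<Rightarrow> bool" where
  "supported_on V E f \<longleftrightarrow> (\<forall>x\<in>V. \<forall>y\<in>V. f x y \<noteq> 0 \<longleftrightarrow> E x y)"

lemma supported_on_del_vert: "supported_on V E f \<Longrightarrow> supported_on (V - {x}) (del_vert_rel E x) f"
  unfolding supported_on_def del_vert_rel_def by auto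

lemma supported_on_gain_entry: "cu_gain_graph V E \<phi> \<Longrightarrow> supported_on V E (gain_entry E \<phi>)"
  unfolding supported_on_def gain_entry_def cu_gain_graph_def by (metis norm_zero zero_neq_one)

lemma supported_on_adj_entry: "supported_on V E (adj_entry E)"
  unfolding supported_on_def adj_entry_def by simp

section \<open>Vertex deletion and the cyclomatic number\<close>

lemma simple_graph_sym: "simple_graph V E \<Longrightarrow> E a b \<Longrightarrow> E b a"
  unfolding simple_graph_def by blast

lemma simple_graph_edge_in: "simple_graph V E \<Longrightarrow> E a b \<Longrightarrow> a \<in> V \<and> b \<in> V"
  unfolding simple_graph_def by blast

lemma simple_graph_irrefl: "simple_graph V E \<Longrightarrow> \<not> E a a"
  unfolding simple_graph_def by blast

lemma simple_graph_finite: "simple_graph V E \<Longrightarrow> finite V"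
  unfolding simple_graph_def by blast

lemma simple_graph_del_vert: "simple_graph V E \<Longrightarrow> simple_graph (V - {x}) (del_vert_rel E x)"
  unfolding simple_graph_def del_vert_rel_def by blast

lemma simple_graph_neighbour_in: "simple_graph V E \<Longrightarrow> E x y \<Longrightarrow> y \<in> V - {x}"
  unfolding simple_graph_def by blast

lemma symp_simple_graph: "simple_graph V E \<Longrightarrow> symp E"
  unfolding simple_graph_def by (blast intro: sympI)

lemma rtranclp_del_vert_rel_imp: "(del_vert_rel E x)\<^sup>*\<^sup>* a b \<Longrightarrow> E\<^sup>*\<^sup>* a b"
  by (induction rule: rtranclp.induct) (auto simp: del_vert_rel_def intro: rtranclp.rtrancl_into_rtrancl)

lemma rtranclp_del_vert_rel_if_not_reach:
  assumes "E\<^sup>*\<^sup>* y z" "\<not> E\<^sup>*\<^sup>* y x"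
  shows "(del_vert_rel E x)\<^sup>*\<^sup>* y z"
  using assms
proof (induction rule: rtranclp_induct)
  case (step z1 z)
  have "z \<noteq> x" using step by (metis rtranclp.rtrancl_into_rtrancl)
  then have "del_vert_rel E x z1 z" using step by (auto simp: del_vert_rel_def)
  then show ?case using step by (meson rtranclp.rtrancl_into_rtrancl)
qed simp

lemma reach_neighbour_del_vert:
  assumes "E\<^sup>*\<^sup>* y x" "y \<noteq> x" "symp E"
  shows "\<exists>m. E x m \<and> (del_vert_rel E x)\<^sup>*\<^sup>* y m"
  using assms(1,2)
proof (induction rule: converse_rtranclp_induct)
  case (step y y1)
  show ?case
  proof (cases "y1 = x")
    case True
    then have "E x y" using sympD[OF assms(3) step(1)] by simp
    then show ?thesis by blast
  next
    case False
    then obtain m where m: "E x m" "(del_vert_rel E x)\<^sup>*\<^sup>* y1 m" using step by auto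
    have "del_vert_rel E x y y1" using step False by (simp add: del_vert_rel_def)
    then show ?thesis using m by (meson converse_rtranclp_into_rtranclp)
  qed
qed simp

definition reach_rel :: "'a set \<Rightarrow> ('a \<Rightarrow> 'a \<Rightarrow> bool) \<Rightarrow> ('a \<times> 'a) set" where
  "reach_rel V E = {(x, y). x \<in> V \<and> y \<in> V \<and> E\<^sup>*\<^sup>* x y}"

lemma equiv_reach_rel:
  assumes "symp E"
  shows "equiv V (reach_rel V E)"
proof -
  have "\<And>a b. E\<^sup>*\<^sup>* a b \<Longrightarrow> E\<^sup>*\<^sup>* b a" using symp_rtranclp[OF assms] by (rule sympD)
  then show ?thesis unfolding equiv_def refl_on_def sym_def trans_def reach_rel_def
    by (auto intro: rtranclp_trans)
qed

lemma num_components_eq_card_quotient: "num_components V E = card (V // reach_rel V E)"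
  unfolding num_components_def reach_rel_def by simp

abbreviation del_vert_component :: "'a set \<Rightarrow> ('a \<Rightarrow> 'a \<Rightarrow> bool) \<Rightarrow> 'a \<Rightarrow> 'a \<Rightarrow> 'a set" where
  "del_vert_component V E x y \<equiv> reach_rel (V - {x}) (del_vert_rel E x) `` {y}"

lemma del_vert_component_eq:
  assumes sg: "simple_graph V E" and u: "E w u" "E w u'" and c: "(del_vert_rel E w)\<^sup>*\<^sup>* u u'"
  shows "del_vert_component V E w u = del_vert_component V E w u'"
proof -
  have "equiv (V - {w}) (reach_rel (V - {w}) (del_vert_rel E w))"
    using symp_simple_graph[OF simple_graph_del_vert[OF sg]] by (rule equiv_reach_rel)
  moreover have "(u, u') \<in> reach_rel (V - {w}) (del_vert_rel E w)"
    using c simple_graph_neighbour_in[OF sg u(1)] simple_graph_neighbour_in[OF sg u(2)]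
    by (simp add: reach_rel_def)
  ultimately show ?thesis by (rule equiv_class_eq)
qed

lemma component_del_vert_cases:
  assumes sg: "simple_graph V E" and x: "x \<in> V" and y: "y \<in> V - {x}"
  shows "del_vert_component V E x y \<in> (V // reach_rel V E - {reach_rel V E `` {x}})
    \<union> del_vert_component V E x ` {m. E x m}"
proof (cases "E\<^sup>*\<^sup>* y x")
  case True
  then obtain m where m: "E x m" "(del_vert_rel E x)\<^sup>*\<^sup>* y m"
    using reach_neighbour_del_vert[OF True _ symp_simple_graph[OF sg]] y by auto
  have "equiv (V - {x}) (reach_rel (V - {x}) (del_vert_rel E x))"
    using symp_simple_graph[OF simple_graph_del_vert[OF sg]] by (rule equiv_reach_rel)
  moreover have "(y, m) \<in> reach_rel (V - {x}) (del_vert_rel E x)"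
    using y m simple_graph_neighbour_in[OF sg m(1)] by (simp add: reach_rel_def)
  ultimately have "del_vert_component V E x y = del_vert_component V E x m" by (rule equiv_class_eq)
  then show ?thesis using m by auto
next
  case False
  have "del_vert_component V E x y = reach_rel V E `` {y}"
  proof (intro equalityI subsetI)
    fix z assume "z \<in> del_vert_component V E x y"
    then show "z \<in> reach_rel V E `` {y}"
      by (auto simp: reach_rel_def dest: rtranclp_del_vert_rel_imp)
  next
    fix z assume "z \<in> reach_rel V E `` {y}"
    then have z: "z \<in> V" "E\<^sup>*\<^sup>* y z" by (auto simp: reach_rel_def)
    have "z \<noteq> x" using z False by auto
    then show "z \<in> del_vert_component V E x y"
      using z y rtranclp_del_vert_rel_if_not_reach[OF z(2) False] by (auto simp: reach_rel_def)
  qed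
  moreover have "reach_rel V E `` {y} \<noteq> reach_rel V E `` {x}"
  proof
    assume "reach_rel V E `` {y} = reach_rel V E `` {x}"
    moreover have "x \<in> reach_rel V E `` {x}" using x by (auto simp: reach_rel_def)
    ultimately have "x \<in> reach_rel V E `` {y}" by simp
    then show False using False by (auto simp: reach_rel_def)
  qed
  ultimately show ?thesis using y by (auto intro: quotientI)
qed

lemma num_components_del_vert_le:
  assumes sg: "simple_graph V E" and x: "x \<in> V"
  shows "num_components (V - {x}) (del_vert_rel E x) + 1 \<le>
     num_components V E + card (del_vert_component V E x ` {y. E x y})"
proof -
  let ?R = "reach_rel V E" and ?N = "{y. E x y}"
  have fQ: "finite (V // ?R)"
    using simple_graph_finite[OF sg] equiv_reach_rel[OF symp_simple_graph[OF sg]]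
    by (simp add: finite_quotient equiv_type)
  have fN: "finite ?N"
    using simple_graph_finite[OF sg] simple_graph_edge_in[OF sg] by (auto intro: finite_subset)
  have xc: "?R `` {x} \<in> V // ?R" using x by (simp add: quotientI)
  have "(V - {x}) // reach_rel (V - {x}) (del_vert_rel E x)
      \<subseteq> (V // ?R - {?R `` {x}}) \<union> del_vert_component V E x ` ?N"
    using component_del_vert_cases[OF sg x] by (auto elim!: quotientE)
  then have "num_components (V - {x}) (del_vert_rel E x)
      \<le> card ((V // ?R - {?R `` {x}}) \<union> del_vert_component V E x ` ?N)"
    unfolding num_components_eq_card_quotient by (rule card_mono[rotated]) (use fQ fN in auto)
  also have "\<dots> \<le> card (V // ?R - {?R `` {x}}) + card (del_vert_component V E x ` ?N)"
    by (rule card_Un_le)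
  also have "card (V // ?R - {?R `` {x}}) = num_components V E - 1"
    using xc fQ by (simp add: num_components_eq_card_quotient)
  finally have "num_components (V - {x}) (del_vert_rel E x)
      \<le> num_components V E - 1 + card (del_vert_component V E x ` ?N)" .
  moreover have "num_components V E \<noteq> 0"
    using xc fQ unfolding num_components_eq_card_quotient by auto
  ultimately show ?thesis by linarith
qed

lemma num_edges_del_vert:
  assumes sg: "simple_graph V E"
  shows "num_edges (del_vert_rel E x) + degree E x = num_edges E"
proof -
  let ?E' = "del_vert_rel E x"
  let ?ES = "\<lambda>E. {{a, b} | a b. E a b}"
  let ?X = "(\<lambda>y. {x, y}) ` {y. E x y}"
  have "?ES E \<subseteq> Pow V" using simple_graph_edge_in[OF sg] by auto
  then have fE: "finite (?ES E)" using simple_graph_finite[OF sg] finite_subset by blast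
  have split: "?ES E = ?ES ?E' \<union> ?X"
  proof (intro equalityI subsetI)
    fix e assume "e \<in> ?ES E"
    then obtain a b where e: "e = {a, b}" "E a b" by auto
    show "e \<in> ?ES ?E' \<union> ?X"
    proof (cases "a = x")
      case True then show ?thesis using e by auto
    next
      case False
      show ?thesis
      proof (cases "b = x")
        case True then show ?thesis using e simple_graph_sym[OF sg e(2)] by (auto simp: insert_commute)
      next
        case False
        then show ?thesis using e \<open>a \<noteq> x\<close> by (auto simp: del_vert_rel_def)
      qed
    qed
  next
    fix e assume "e \<in> ?ES ?E' \<union> ?X"
    then show "e \<in> ?ES E" by (auto simp: del_vert_rel_def)
  qed
  have disj: "?ES ?E' \<inter> ?X = {}"
  proof -
    { fix e assume e1: "e \<in> ?ES ?E'" and e2: "e \<in> ?X"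
      from e1 obtain a b where "e = {a, b}" "a \<noteq> x" "b \<noteq> x" by (auto simp: del_vert_rel_def)
      moreover have "x \<in> e" using e2 by blast
      ultimately have False by blast }
    then show ?thesis by blast
  qed
  have inj: "inj_on (\<lambda>y. {x, y}) {y. E x y}"
    by (intro inj_onI) (use simple_graph_irrefl[OF sg] in \<open>auto simp: doubleton_eq_iff\<close>)
  have "num_edges E = card (?ES ?E') + card ?X"
    unfolding num_edges_def split
    by (rule card_Un_disjoint) (use fE split disj in \<open>auto intro: finite_subset\<close>)
  also have "card ?X = degree E x" unfolding degree_def by (rule card_image[OF inj])
  finally show ?thesis unfolding num_edges_def by simp
qed

lemma card_image_add_card_le:
  assumes "finite S" "T \<subseteq> S" "f ` S = f ` (S - T)"
  shows "card (f ` S) + card T \<le> card S"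
proof -
  have "card (f ` S) \<le> card (S - T)" using assms(3) card_image_le assms(1) by (metis finite_Diff)
  moreover have "card (S - T) = card S - card T" using assms(1,2) card_Diff_subset finite_subset by blast
  moreover have "card T \<le> card S" using assms card_mono by blast
  ultimately show ?thesis by linarith
qed

lemma image_eq_image_Diff:
  assumes "\<And>t. t \<in> T \<Longrightarrow> \<exists>s\<in>N - T. f t = f s"
  shows "f ` N = f ` (N - T)"
proof (intro equalityI subsetI)
  fix D assume "D \<in> f ` N"
  then obtain t where t: "t \<in> N" "D = f t" by auto
  show "D \<in> f ` (N - T)"
  proof (cases "t \<in> T")
    case True then show ?thesis using assms t by blast
  next
    case False then show ?thesis using t by blast
  qed
qed auto

text \<open>Deleting x removes its degree many edges and splits its component into at most as many
  pieces as there are distinct components of G - x among the neighbours of x; so every set T of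
  neighbours whose components are already met by the other neighbours contributes to the drop
  of theta.\<close>

lemma theta_del_vert_add_card_le:
  assumes sg: "simple_graph V E" and x: "x \<in> V"
    and T: "T \<subseteq> {y. E x y}"
      "del_vert_component V E x ` {y. E x y} = del_vert_component V E x ` ({y. E x y} - T)"
  shows "theta (V - {x}) (del_vert_rel E x) + int (card T) \<le> theta V E"
proof -
  have "finite {y. E x y}"
    using simple_graph_finite[OF sg] simple_graph_edge_in[OF sg] by (auto intro: finite_subset)
  then have "card (del_vert_component V E x ` {y. E x y}) + card T \<le> degree E x"
    unfolding degree_def by (rule card_image_add_card_le[OF _ T])
  moreover have "card (V - {x}) + 1 = card V"
    using card.remove[OF simple_graph_finite[OF sg] x] by simp
  ultimately show ?thesis
    using num_components_del_vert_le[OF sg x] num_edges_del_vert[OF sg, of x]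
    unfolding theta_def by linarith
qed

lemma theta_del_vert_le:
  "simple_graph V E \<Longrightarrow> x \<in> V \<Longrightarrow> theta (V - {x}) (del_vert_rel E x) \<le> theta V E"
  using theta_del_vert_add_card_le[of V E x "{}"] by simp

lemma theta_del_vert_Suc_le:
  assumes sg: "simple_graph V E" and x: "x \<in> V"
    and ab: "a \<noteq> b" "E x a" "E x b" "(del_vert_rel E x)\<^sup>*\<^sup>* a b"
  shows "theta (V - {x}) (del_vert_rel E x) + 1 \<le> theta V E"
proof -
  have "del_vert_component V E x b = del_vert_component V E x a"
    using del_vert_component_eq[OF sg ab(2,3,4)] by simp
  then have "del_vert_component V E x ` {y. E x y} = del_vert_component V E x ` ({y. E x y} - {b})"
    using ab by (intro image_eq_image_Diff) auto
  then show ?thesis using theta_del_vert_add_card_le[OF sg x, of "{b}"] ab by simp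
qed

section \<open>Walks and cycles\<close>

definition walk :: "('a \<Rightarrow> 'a \<Rightarrow> bool) \<Rightarrow> 'a list \<Rightarrow> bool" where
  "walk E xs \<longleftrightarrow> (\<forall>i. Suc i < length xs \<longrightarrow> E (xs ! i) (xs ! Suc i))"

lemma walk_reach_from_hd:
  assumes "walk E xs" "j < length xs" shows "E\<^sup>*\<^sup>* (xs ! 0) (xs ! j)"
  using assms(2)
proof (induction j)
  case 0 then show ?case by simp
next
  case (Suc j)
  then have "E (xs ! j) (xs ! Suc j)" using assms(1) unfolding walk_def by blast
  then show ?case using Suc by (meson Suc_lessD rtranclp.rtrancl_into_rtrancl)
qed

lemma walk_reach:
  assumes sym: "symp E" and w: "walk E xs" and ab: "a \<in> set xs" "b \<in> set xs"
  shows "E\<^sup>*\<^sup>* a b"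
proof -
  obtain i j where ij: "i < length xs" "j < length xs" "a = xs ! i" "b = xs ! j"
    using ab by (metis in_set_conv_nth)
  have "E\<^sup>*\<^sup>* a (xs ! 0)"
    using sympD[OF symp_rtranclp[OF sym] walk_reach_from_hd[OF w ij(1)]] ij by simp
  then show ?thesis using walk_reach_from_hd[OF w ij(2)] ij by (meson rtranclp_trans)
qed

lemma walk_del_vert: "walk E xs \<Longrightarrow> x \<notin> set xs \<Longrightarrow> walk (del_vert_rel E x) xs"
  unfolding walk_def del_vert_rel_def by (metis Suc_lessD nth_mem)

lemma cycle_edges_subset_set: "e \<in> cycle_edges cs \<Longrightarrow> length cs > 0 \<Longrightarrow> e \<subseteq> set cs"
  unfolding cycle_edges_def by auto

lemma rotate_cycle:
  assumes c: "is_cycle V E cs" and i: "i < length cs"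
  defines "ds \<equiv> rotate i cs"
  shows "length ds = length cs" "distinct ds" "set ds = set cs"
    "\<And>k. k < length cs \<Longrightarrow> ds ! k = cs ! ((i + k) mod length cs)"
    "\<And>k. k < length cs \<Longrightarrow> E (ds ! k) (ds ! ((k + 1) mod length cs))"
    "\<And>k. k < length cs \<Longrightarrow> {ds ! k, ds ! ((k + 1) mod length cs)} \<in> cycle_edges cs"
proof -
  let ?n = "length cs"
  have n: "?n \<ge> 3" "distinct cs" using c unfolding is_cycle_def by auto
  show "length ds = ?n" unfolding ds_def by simp
  show "distinct ds" using n unfolding ds_def by simp
  show "set ds = set cs" unfolding ds_def by simp
  show nth: "\<And>k. k < ?n \<Longrightarrow> ds ! k = cs ! ((i + k) mod ?n)"
    unfolding ds_def by (simp add: nth_rotate)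
  have key: "\<And>k. k < ?n \<Longrightarrow> ds ! ((k + 1) mod ?n) = cs ! (((i + k) mod ?n + 1) mod ?n)"
  proof -
    fix k assume k: "k < ?n"
    have "0 < ?n" using n by linarith
    then have "(k + 1) mod ?n < ?n" by simp
    then have "ds ! ((k + 1) mod ?n) = cs ! ((i + (k + 1) mod ?n) mod ?n)" by (rule nth)
    also have "(i + (k + 1) mod ?n) mod ?n = ((i + k) mod ?n + 1) mod ?n"
      by (simp add: mod_add_right_eq mod_add_left_eq add.assoc mod_Suc_eq)
    finally show "ds ! ((k + 1) mod ?n) = cs ! (((i + k) mod ?n + 1) mod ?n)" .
  qed
  show "\<And>k. k < ?n \<Longrightarrow> E (ds ! k) (ds ! ((k + 1) mod ?n))"
  proof -
    fix k assume k: "k < ?n"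
    have "(i + k) mod ?n < ?n" by (rule mod_less_divisor) (use n in linarith)
    then show "E (ds ! k) (ds ! ((k + 1) mod ?n))" using c key[OF k] nth[OF k] unfolding is_cycle_def by simp
  qed
  show "\<And>k. k < ?n \<Longrightarrow> {ds ! k, ds ! ((k + 1) mod ?n)} \<in> cycle_edges cs"
  proof -
    fix k assume k: "k < ?n"
    have "(i + k) mod ?n < ?n" by (rule mod_less_divisor) (use n in linarith)
    moreover have "{ds ! k, ds ! ((k + 1) mod ?n)} = {cs ! ((i + k) mod ?n), cs ! (((i + k) mod ?n + 1) mod ?n)}"
      using key[OF k] nth[OF k] by simp
    ultimately show "{ds ! k, ds ! ((k + 1) mod ?n)} \<in> cycle_edges cs"
      unfolding cycle_edges_def by (intro CollectI exI[of _ "(i + k) mod ?n"] conjI)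
  qed
qed

lemma cycle_neighbours_connected:
  assumes sg: "simple_graph V E" and c: "is_cycle V E cs" and i: "i < length cs"
  defines "w \<equiv> cs ! i" and "x \<equiv> cs ! ((i + 1) mod length cs)"
  shows "\<exists>y. y \<noteq> x \<and> E w x \<and> E w y \<and> {w, x} \<in> cycle_edges cs \<and> {w, y} \<in> cycle_edges cs
     \<and> (del_vert_rel E w)\<^sup>*\<^sup>* x y"
proof -
  let ?n = "length cs"
  let ?ds = "rotate i cs"
  note r = rotate_cycle[OF c i]
  have n: "?n \<ge> 3" using c unfolding is_cycle_def by auto
  have ne: "cs \<noteq> []" using n by auto
  then have d0: "?ds ! 0 = w" using r(4)[of 0] n i unfolding w_def by simp
  have d1: "?ds ! 1 = x" using r(4)[of 1] n i unfolding x_def by simp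
  define y where "y = ?ds ! (?n - 1)"
  have e1: "E w x" "{w, x} \<in> cycle_edges cs" using r(5,6)[of 0] n d0 d1 ne by auto
  have "E y w" "{y, w} \<in> cycle_edges cs" using r(5,6)[of "?n - 1"] n d0 ne unfolding y_def by auto
  then have e2: "E w y" "{w, y} \<in> cycle_edges cs" using simple_graph_sym[OF sg] by (auto simp: insert_commute)
  have "y \<noteq> x" unfolding y_def using d1[symmetric] r(1,2) n by (simp add: nth_eq_iff_index_eq)
  let ?ts = "drop 1 ?ds"
  have wt: "walk E ?ts" unfolding walk_def
  proof (intro allI impI)
    fix k assume k: "Suc k < length ?ts"
    then have "k + 1 < ?n" "(k + 1 + 1) mod ?n = k + 2" using r(1) by auto
    then show "E (?ts ! k) (?ts ! Suc k)" using r(5)[of "k + 1"] r(1) by simp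
  qed
  have "?ds ! 0 # drop (Suc 0) ?ds = drop 0 ?ds" by (rule Cons_nth_drop_Suc) (use r(1) ne in simp)
  then have "?ds = w # ?ts" using d0 by simp
  then have "w \<notin> set ?ts" using r(2) by (metis distinct.simps(2))
  then have wt': "walk (del_vert_rel E w) ?ts" by (rule walk_del_vert[OF wt])
  have lt: "length ?ts = ?n - 1" using r(1) by simp
  have "?ts ! 0 = x" using d1 r(1) n by simp
  moreover have "?ts ! (?n - 2) = y" using r(1) n unfolding y_def by (simp add: Suc_diff_Suc numeral_2_eq_2)
  moreover have "0 < length ?ts" "?n - 2 < length ?ts" using lt n by arith+
  ultimately have "x \<in> set ?ts" "y \<in> set ?ts" by (metis nth_mem)+
  then have "(del_vert_rel E w)\<^sup>*\<^sup>* x y"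
    by (intro walk_reach[OF symp_simple_graph[OF simple_graph_del_vert[OF sg]] wt'])
  then show ?thesis using e1 e2 \<open>y \<noteq> x\<close> by blast
qed

lemma is_cycle_set_subset: "is_cycle V E cs \<Longrightarrow> set cs \<subseteq> V" unfolding is_cycle_def by blast

lemma theta_del_vert_on_cycle:
  assumes sg: "simple_graph V E" and oc: "on_cycle V E v"
  shows "theta (V - {v}) (del_vert_rel E v) + 1 \<le> theta V E"
proof -
  obtain cs where cs: "is_cycle V E cs" "v \<in> set cs" using oc unfolding on_cycle_def by blast
  obtain i where i: "i < length cs" "cs ! i = v" using cs(2) by (metis in_set_conv_nth)
  obtain y where y: "y \<noteq> cs ! ((i + 1) mod length cs)" "E v (cs ! ((i + 1) mod length cs))" "E v y"
    "(del_vert_rel E v)\<^sup>*\<^sup>* (cs ! ((i + 1) mod length cs)) y"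
    using cycle_neighbours_connected[OF sg cs(1) i(1)] i(2) by blast
  have "v \<in> V" using cs is_cycle_set_subset by blast
  then show ?thesis using theta_del_vert_Suc_le[OF sg _ _ y(2,3,4)] y(1) by auto
qed

text \<open>The two B-neighbours x, y of w are connected in G - w, and so are the A-neighbour z off B
  and the other A-neighbour z'; two of these neighbours are therefore redundant for the count of
  components of G - w.\<close>

lemma theta_drop_two_at_branch:
  assumes sg: "simple_graph V E" and A: "is_cycle V E A" and B: "is_cycle V E B"
    and j: "j < length A" and wB: "A ! j \<in> set B"
    and nz: "{A ! j, A ! ((j + 1) mod length A)} \<notin> cycle_edges B"
  shows "theta (V - {A ! j}) (del_vert_rel E (A ! j)) + 2 \<le> theta V E"
proof -
  define w where "w = A ! j"
  define z where "z = A ! ((j + 1) mod length A)"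
  have wV: "w \<in> V" using A j is_cycle_set_subset w_def by (metis nth_mem subsetD)
  obtain iB where iB: "iB < length B" "B ! iB = w" using wB w_def by (metis in_set_conv_nth)
  define x where "x = B ! ((iB + 1) mod length B)"
  obtain y where y: "y \<noteq> x" "E w x" "E w y" "{w, x} \<in> cycle_edges B" "{w, y} \<in> cycle_edges B"
    "(del_vert_rel E w)\<^sup>*\<^sup>* x y"
    using cycle_neighbours_connected[OF sg B iB(1)] iB(2) unfolding x_def by blast
  obtain z' where z': "z' \<noteq> z" "E w z" "E w z'" "(del_vert_rel E w)\<^sup>*\<^sup>* z z'"
    using cycle_neighbours_connected[OF sg A j] unfolding w_def z_def by blast
  have zx: "z \<noteq> x" "z \<noteq> y" using nz y(4,5) unfolding w_def[symmetric] z_def[symmetric] by auto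
  have cxy: "del_vert_component V E w x = del_vert_component V E w y"
    by (rule del_vert_component_eq[OF sg y(2,3,6)])
  have czz: "del_vert_component V E w z = del_vert_component V E w z'"
    by (rule del_vert_component_eq[OF sg z'(2,3,4)])
  obtain T where T: "T \<subseteq> {u. E w u}" "card T = 2"
    "\<And>t. t \<in> T \<Longrightarrow> \<exists>s\<in>{u. E w u} - T. del_vert_component V E w t = del_vert_component V E w s"
  proof (cases "z' = x")
    case True
    show ?thesis
      by (rule that[of "{y, z}"]) (use y z' zx True cxy czz in auto)
  next
    case False
    show ?thesis
    proof (cases "z' = y")
      case True
      show ?thesis
        by (rule that[of "{x, z}"]) (use y z' zx True cxy czz in auto)
    next
      case False2: False
      show ?thesis
        by (rule that[of "{y, z'}"]) (use y z' zx False False2 cxy czz in auto)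
    qed
  qed
  have "del_vert_component V E w ` {u. E w u} = del_vert_component V E w ` ({u. E w u} - T)"
    by (rule image_eq_image_Diff) (use T(3) in blast)
  then have "theta (V - {w}) (del_vert_rel E w) + int (card T) \<le> theta V E"
    by (rule theta_del_vert_add_card_le[OF sg wV T(1)])
  then show ?thesis using T(2) unfolding w_def by simp
qed

text \<open>Walking along A from v, the first edge of A that is not an edge of B starts at a vertex
  of B; there A branches off B.\<close>

lemma theta_drop_two_if_edge_not_shared:
  assumes sg: "simple_graph V E" and A: "is_cycle V E A" and B: "is_cycle V E B"
    and v: "v \<in> set A" "v \<in> set B" and e: "e \<in> cycle_edges A" "e \<notin> cycle_edges B"
  shows "\<exists>w\<in>V. theta (V - {w}) (del_vert_rel E w) + 2 \<le> theta V E"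
proof -
  let ?n = "length A"
  have n: "?n \<ge> 3" using A unfolding is_cycle_def by auto
  have n0: "0 < ?n" using n by linarith
  obtain i0 where i0: "i0 < ?n" "A ! i0 = v" using v(1) by (metis in_set_conv_nth)
  obtain k where k: "k < ?n" "e = {A ! k, A ! ((k + 1) mod ?n)}" using e(1) unfolding cycle_edges_def by blast
  define P where "P = (\<lambda>m. m < ?n \<and> {A ! ((i0 + m) mod ?n), A ! (((i0 + m) mod ?n + 1) mod ?n)} \<notin> cycle_edges B)"
  define m1 where "m1 = (k + ?n - i0) mod ?n"
  have "(i0 + m1) mod ?n = k"
  proof -
    have "(i0 + m1) mod ?n = (i0 + (k + ?n - i0)) mod ?n" unfolding m1_def by (simp add: mod_add_right_eq)
    also have "i0 + (k + ?n - i0) = k + ?n" using i0 by simp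
    finally show ?thesis using k by simp
  qed
  then have "P m1" unfolding P_def m1_def using e(2) k n0 by simp
  define m0 where "m0 = (LEAST m. P m)"
  have Pm0: "P m0" unfolding m0_def by (rule LeastI[of P m1]) fact
  define j where "j = (i0 + m0) mod ?n"
  have j: "j < ?n" unfolding j_def using n0 by simp
  have nz: "{A ! j, A ! ((j + 1) mod ?n)} \<notin> cycle_edges B" using Pm0 unfolding P_def j_def by simp
  have wB: "A ! j \<in> set B"
  proof (cases "m0 = 0")
    case True
    then show ?thesis using i0 v(2) unfolding j_def by simp
  next
    case False
    then have "\<not> P (m0 - 1)" unfolding m0_def by (metis diff_less not_less_Least zero_less_iff_neq_zero less_one m0_def)
    moreover have "m0 - 1 < ?n" using Pm0 unfolding P_def by linarith
    ultimately have inB: "{A ! ((i0 + (m0 - 1)) mod ?n), A ! (((i0 + (m0 - 1)) mod ?n + 1) mod ?n)} \<in> cycle_edges B"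
      unfolding P_def by simp
    have "((i0 + (m0 - 1)) mod ?n + 1) mod ?n = (i0 + (m0 - 1) + 1) mod ?n" by (simp add: mod_Suc_eq)
    also have "i0 + (m0 - 1) + 1 = i0 + m0" using False by simp
    finally have "A ! j \<in> {A ! ((i0 + (m0 - 1)) mod ?n), A ! (((i0 + (m0 - 1)) mod ?n + 1) mod ?n)}"
      unfolding j_def by simp
    moreover have "length B > 0" using B unfolding is_cycle_def by auto
    ultimately show ?thesis using cycle_edges_subset_set[OF inB] by blast
  qed
  moreover have "A ! j \<in> V" using A j is_cycle_set_subset by (metis nth_mem subsetD)
  ultimately show ?thesis using theta_drop_two_at_branch[OF sg A B j wB nz] by blast
qed

lemma theta_drop_two_if_not_one_cycle:
  assumes sg: "simple_graph V E" and oc: "on_cycle V E v" and no: "\<not> on_exactly_one_cycle V E v"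
  shows "\<exists>w\<in>V. theta (V - {w}) (del_vert_rel E w) + 2 \<le> theta V E"
proof -
  let ?S = "{cycle_edges cs | cs. is_cycle V E cs \<and> v \<in> set cs}"
  obtain A where A: "is_cycle V E A" "v \<in> set A" using oc unfolding on_cycle_def by blast
  have "\<exists>B. is_cycle V E B \<and> v \<in> set B \<and> cycle_edges B \<noteq> cycle_edges A"
  proof (rule ccontr)
    assume nb: "\<nexists>B. is_cycle V E B \<and> v \<in> set B \<and> cycle_edges B \<noteq> cycle_edges A"
    have "?S = {cycle_edges A}"
    proof (intro equalityI subsetI)
      fix X assume "X \<in> ?S"
      then obtain cs where "X = cycle_edges cs" "is_cycle V E cs" "v \<in> set cs" by blast
      then show "X \<in> {cycle_edges A}" using nb by blast
    next
      fix X assume "X \<in> {cycle_edges A}"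
      then show "X \<in> ?S" using A by blast
    qed
    then show False using no unfolding on_exactly_one_cycle_def by simp
  qed
  then obtain B where B: "is_cycle V E B" "v \<in> set B" "cycle_edges B \<noteq> cycle_edges A" by blast
  show ?thesis
  proof (cases "cycle_edges A \<subseteq> cycle_edges B")
    case True
    then obtain e where "e \<in> cycle_edges B" "e \<notin> cycle_edges A" using B(3) by blast
    then show ?thesis using theta_drop_two_if_edge_not_shared[OF sg B(1) A(1) B(2) A(2)] by blast
  next
    case False
    then obtain e where "e \<in> cycle_edges A" "e \<notin> cycle_edges B" by blast
    then show ?thesis using theta_drop_two_if_edge_not_shared[OF sg A(1) B(1) A(2) B(2)] by blast
  qed
qed

lemma walk_snoc:
  assumes "walk E xs" "xs \<noteq> []" "E (last xs) y" shows "walk E (xs @ [y])"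
  unfolding walk_def
proof (intro allI impI)
  fix i assume i: "Suc i < length (xs @ [y])"
  show "E ((xs @ [y]) ! i) ((xs @ [y]) ! Suc i)"
  proof (cases "Suc i < length xs")
    case True
    then show ?thesis using assms(1) unfolding walk_def by (simp add: nth_append)
  next
    case False
    then have "Suc i = length xs" using i by simp
    then have "i = length xs - 1" by simp
    then show ?thesis using assms(2,3) \<open>Suc i = length xs\<close> by (simp add: nth_append last_conv_nth)
  qed
qed

lemma walk_butlast: "walk E xs \<Longrightarrow> walk E (butlast xs)"
  unfolding walk_def by (simp add: nth_butlast)

lemma longest_path_end:
  assumes sg: "simple_graph V E" and ne: "V \<noteq> {}"
  obtains xs where "xs \<noteq> []" "distinct xs" "set xs \<subseteq> V" "walk E xs"
    "\<And>y. E (last xs) y \<Longrightarrow> y \<in> set xs"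
proof -
  let ?P = "\<lambda>xs. xs \<noteq> [] \<and> distinct xs \<and> set xs \<subseteq> V \<and> walk E xs"
  obtain v0 where v0: "v0 \<in> V" using ne by blast
  have P0: "?P [v0]" using v0 by (simp add: walk_def)
  have bnd: "\<forall>xs. ?P xs \<longrightarrow> length xs < card V + 1"
  proof (intro allI impI)
    fix xs assume h: "?P xs"
    then have "card (set xs) \<le> card V" using simple_graph_finite[OF sg] card_mono by blast
    moreover have "length xs = card (set xs)" using h distinct_card by metis
    ultimately show "length xs < card V + 1" by simp
  qed
  obtain xs where xs: "?P xs" "\<forall>ys. ?P ys \<longrightarrow> length ys \<le> length xs"
    using ex_has_greatest_nat[of ?P "[v0]" length "card V + 1"] P0 bnd by blast
  have nb: "y \<in> set xs" if y: "E (last xs) y" for y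
  proof (rule ccontr)
    assume "y \<notin> set xs"
    then have "?P (xs @ [y])" using xs(1) y simple_graph_edge_in[OF sg y] walk_snoc[of E xs y] by auto
    then have "length (xs @ [y]) \<le> length xs" using xs(2) by blast
    then show False by simp
  qed
  show ?thesis by (rule that) (use xs(1) nb in auto)
qed

lemma exists_leaf_or_cycle_vertex:
  assumes sg: "simple_graph V E" and ne: "V \<noteq> {}"
  obtains (isolated) x where "x \<in> V" "degree E x = 0"
    | (pendant) x w where "x \<in> V" "{y. E x y} = {w}"
    | (cycle) x a b where "x \<in> V" "a \<noteq> b" "E x a" "E x b" "(del_vert_rel E x)\<^sup>*\<^sup>* a b"
proof -
  obtain xs where xs: "xs \<noteq> []" "distinct xs" "set xs \<subseteq> V" "walk E xs"
    and nb: "\<And>y. E (last xs) y \<Longrightarrow> y \<in> set xs"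
    using longest_path_end[OF sg ne] by blast
  define x where "x = last xs"
  have xV: "x \<in> V" using xs(1,3) unfolding x_def by auto
  consider "degree E x = 0" | "degree E x = 1" | "\<not> card {y. E x y} \<le> Suc 0"
    unfolding degree_def by linarith
  then show ?thesis
  proof cases
    case 1
    with xV show ?thesis by (rule isolated)
  next
    case 2
    then obtain w where "{y. E x y} = {w}" unfolding degree_def by (metis card_1_singletonE)
    with xV show ?thesis by (rule pendant)
  next
    case 3
    then obtain a b where "a \<in> {y. E x y}" "b \<in> {y. E x y}" "a \<noteq> b"
      using card_le_Suc0_iff_eq[of "{y. E x y}"] by (metis card.infinite zero_le)
    then have ab: "E x a" "E x b" "a \<noteq> b" by auto
    have xsb: "xs = butlast xs @ [x]" using xs(1) unfolding x_def by simp
    have "distinct (butlast xs @ [x])" using xs(2) xsb by simp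
    then have "x \<notin> set (butlast xs)" by simp
    then have w: "walk (del_vert_rel E x) (butlast xs)" by (rule walk_del_vert[OF walk_butlast[OF xs(4)]])
    have sxs: "set xs = insert x (set (butlast xs))"
      using xsb by (metis Un_insert_right empty_set list.simps(15) set_append sup_bot.right_neutral)
    have "a \<noteq> x" "b \<noteq> x" using ab simple_graph_irrefl[OF sg, of x] by auto
    then have "a \<in> set (butlast xs)" "b \<in> set (butlast xs)" using nb ab sxs unfolding x_def by auto
    then have "(del_vert_rel E x)\<^sup>*\<^sup>* a b"
      by (intro walk_reach[OF symp_simple_graph[OF simple_graph_del_vert[OF sg]] w])
    with xV ab show ?thesis by (intro cycle)
  qed
qed

lemma pendant_not_on_cycle:
  assumes sg: "simple_graph V E" and c: "is_cycle V E cs" and N: "{y. E u y} = {w}"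
  shows "u \<notin> set cs"
proof
  assume "u \<in> set cs"
  then obtain i where i: "i < length cs" "cs ! i = u" by (metis in_set_conv_nth)
  obtain y where y: "y \<noteq> cs ! ((i + 1) mod length cs)" "E u (cs ! ((i + 1) mod length cs))" "E u y"
    using cycle_neighbours_connected[OF sg c i(1)] i(2) by blast
  then have "y \<in> {w}" "cs ! ((i + 1) mod length cs) \<in> {w}" using N by blast+
  then show False using y(1) by simp
qed

lemma is_cycle_del_vert:
  assumes c: "is_cycle V E cs" and u: "u \<notin> set cs"
  shows "is_cycle (V - {u}) (del_vert_rel E u) cs"
proof -
  have n: "length cs > 0" using c unfolding is_cycle_def by auto
  show ?thesis using c u n unfolding is_cycle_def del_vert_rel_def
    by (auto intro!: nth_mem dest: nth_mem)
qed

section \<open>The rank bound\<close>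

lemma rank_on_isolated_vertex:
  assumes sg: "simple_graph V E" and f: "supported_on V E f" and x: "x \<in> V" and d: "degree E x = 0"
  shows "rank_on f V V = rank_on f (V - {x}) (V - {x})"
proof -
  have fV: "finite V" using simple_graph_finite[OF sg] .
  have "{y. E x y} \<subseteq> V" using simple_graph_edge_in[OF sg] by auto
  then have nE: "\<not> E x y" for y using d fV finite_subset unfolding degree_def by fastforce
  have row: "f x j = 0" if "j \<in> V" for j using that f x nE unfolding supported_on_def by blast
  have col: "f i x = 0" if "i \<in> V" for i
    using that f x nE simple_graph_sym[OF sg] unfolding supported_on_def by blast
  have "rank_on f V V = rank_on f (V - {x}) V" by (rule rank_on_zero_row) (use row in blast)
  also have "\<dots> = rank_on f (V - {x}) (V - {x})" by (rule rank_on_zero_col) (use fV col in auto)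
  finally show ?thesis .
qed

lemma rank_on_pendant_vertex:
  assumes sg: "simple_graph V E" and f: "supported_on V E f" and N: "{y. E u y} = {w}"
  shows "rank_on f V V = rank_on f (V - {u} - {w}) (V - {u} - {w}) + 2"
proof -
  have fV: "finite V" using simple_graph_finite[OF sg] .
  have uw: "E u w" using N by blast
  have uV: "u \<in> V" "w \<in> V" "u \<noteq> w"
    using simple_graph_edge_in[OF sg uw] simple_graph_irrefl[OF sg, of u] uw by auto
  have row_u: "f u j = 0" if "j \<in> V" "j \<noteq> w" for j
    using that N f uV unfolding supported_on_def by blast
  have col_u: "f i u = 0" if "i \<in> V" "i \<noteq> w" for i
    using that N f uV simple_graph_sym[OF sg] unfolding supported_on_def by blast
  have nz: "f u w \<noteq> 0" "f w u \<noteq> 0"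
    using f uV uw simple_graph_sym[OF sg uw] unfolding supported_on_def by blast+
  have "rank_on f V V \<le> rank_on f (V - {w}) V + 1" by (rule rank_on_delete_row[OF fV])
  also have "rank_on f (V - {w}) V = rank_on f (V - {w}) (V - {u})"
    by (rule rank_on_zero_col) (use fV col_u in auto)
  also have "\<dots> \<le> rank_on f (V - {w}) (V - {u} - {w}) + 1"
    by (rule rank_on_delete_col) (use fV in auto)
  also have "rank_on f (V - {w}) (V - {u} - {w}) = rank_on f (V - {w} - {u}) (V - {u} - {w})"
    by (rule rank_on_zero_row) (use row_u in auto)
  also have "V - {w} - {u} = V - {u} - {w}" by auto
  finally show ?thesis
    using rank_on_remove_pair_ge[OF fV uV(3) uV(1,2) uV(1,2) row_u col_u nz] by simp
qed

lemma theta_empty: "simple_graph {} E \<Longrightarrow> theta {} E = 0"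
  unfolding theta_def num_edges_def num_components_def simple_graph_def by simp

theorem rank_on_lower_bound:
  fixes f :: "'a \<Rightarrow> 'a \<Rightarrow> 'b::field" and g :: "'a \<Rightarrow> 'a \<Rightarrow> 'c::field"
  assumes "simple_graph V E" "supported_on V E f" "supported_on V E g"
  shows "int (rank_on g V V) - 2 * theta V E \<le> int (rank_on f V V)"
  using assms
proof (induction "card V" arbitrary: V E rule: less_induct)
  case less
  note sg = less.prems(1) and f = less.prems(2) and g = less.prems(3)
  have fV: "finite V" using simple_graph_finite[OF sg] .
  have IH: "int (rank_on g (V - {x}) (V - {x})) - 2 * theta (V - {x}) (del_vert_rel E x)
      \<le> int (rank_on f (V - {x}) (V - {x}))" if "x \<in> V" for x
    using card_Diff1_less[OF fV that] simple_graph_del_vert[OF sg]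
      supported_on_del_vert[OF f] supported_on_del_vert[OF g] by (rule less.hyps)
  show ?case
  proof (cases "V = {}")
    case True
    then have "theta V E = 0" using theta_empty sg by simp
    then show ?thesis using True by simp
  next
    case False
    show ?thesis
    proof (cases rule: exists_leaf_or_cycle_vertex[OF sg False, case_names isolated pendant cycle])
      case (isolated x)
      then show ?thesis using IH[OF isolated(1)] theta_del_vert_le[OF sg isolated(1)]
        rank_on_isolated_vertex[OF sg f isolated] rank_on_isolated_vertex[OF sg g isolated] by simp
    next
      case (pendant x w)
      let ?V' = "V - {x}" and ?E' = "del_vert_rel E x"
      have sg': "simple_graph ?V' ?E'" by (rule simple_graph_del_vert[OF sg])
      have wV: "w \<in> ?V'" using pendant(2) simple_graph_neighbour_in[OF sg] by blast
      have "card (?V' - {w}) < card V"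
        using card_Diff1_less[OF fV pendant(1)] card_Diff1_less[OF finite_Diff[OF fV] wV] by linarith
      then have "int (rank_on g (?V' - {w}) (?V' - {w})) - 2 * theta (?V' - {w}) (del_vert_rel ?E' w)
          \<le> int (rank_on f (?V' - {w}) (?V' - {w}))"
        using simple_graph_del_vert[OF sg'] supported_on_del_vert[OF supported_on_del_vert[OF f]]
          supported_on_del_vert[OF supported_on_del_vert[OF g]] by (rule less.hyps)
      then show ?thesis
        using theta_del_vert_le[OF sg' wV] theta_del_vert_le[OF sg pendant(1)]
          rank_on_pendant_vertex[OF sg f pendant(2)] rank_on_pendant_vertex[OF sg g pendant(2)] by simp
    next
      case (cycle x a b)
      then show ?thesis
        using IH[OF cycle(1)] theta_del_vert_Suc_le[OF sg cycle]
          rank_on_remove_bounds[OF fV cycle(1), of f] rank_on_remove_bounds[OF fV cycle(1), of g]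
        by linarith
    qed
  qed
qed

lemma rank_on_lower_bound_del_vert:
  assumes "simple_graph V E" "supported_on V E f" "supported_on V E g"
  shows "int (rank_on g (V - {x}) (V - {x})) - 2 * theta (V - {x}) (del_vert_rel E x)
    \<le> int (rank_on f (V - {x}) (V - {x}))"
  using assms by (intro rank_on_lower_bound simple_graph_del_vert supported_on_del_vert)

section \<open>Equality in the rank bound\<close>

definition attains_rank_lower_bound ::
    "'a set \<Rightarrow> ('a \<Rightarrow> 'a \<Rightarrow> bool) \<Rightarrow> ('a \<Rightarrow> 'a \<Rightarrow> 'b::field) \<Rightarrow> ('a \<Rightarrow> 'a \<Rightarrow> 'c::field) \<Rightarrow> bool" where
  "attains_rank_lower_bound V E f g \<longleftrightarrow> int (rank_on f V V) = int (rank_on g V V) - 2 * theta V E"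

lemma attains_rank_lower_bound_theta_del_vert:
  assumes sg: "simple_graph V E" and f: "supported_on V E f" and g: "supported_on V E g"
    and eq: "attains_rank_lower_bound V E f g" and x: "x \<in> V"
  shows "theta V E \<le> theta (V - {x}) (del_vert_rel E x) + 1"
  using rank_on_lower_bound_del_vert[OF sg f g, of x]
    rank_on_remove_bounds[OF simple_graph_finite[OF sg] x, of f]
    rank_on_remove_bounds[OF simple_graph_finite[OF sg] x, of g] eq
  unfolding attains_rank_lower_bound_def by linarith

lemma attains_rank_lower_bound_del_vert:
  assumes sg: "simple_graph V E" and f: "supported_on V E f" and g: "supported_on V E g"
    and eq: "attains_rank_lower_bound V E f g" and x: "x \<in> V"
    and drop: "theta (V - {x}) (del_vert_rel E x) + 1 \<le> theta V E"
  shows "theta V E = theta (V - {x}) (del_vert_rel E x) + 1"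
    and "rank_on f V V = rank_on f (V - {x}) (V - {x})"
    and "rank_on g V V = rank_on g (V - {x}) (V - {x}) + 2"
    and "attains_rank_lower_bound (V - {x}) (del_vert_rel E x) f g"
  using rank_on_lower_bound_del_vert[OF sg f g, of x]
    rank_on_remove_bounds[OF simple_graph_finite[OF sg] x, of f]
    rank_on_remove_bounds[OF simple_graph_finite[OF sg] x, of g]
    attains_rank_lower_bound_theta_del_vert[OF sg f g eq x] eq drop
  unfolding attains_rank_lower_bound_def by linarith+

lemma attains_rank_lower_bound_on_exactly_one_cycle:
  assumes sg: "simple_graph V E" and f: "supported_on V E f" and g: "supported_on V E g"
    and eq: "attains_rank_lower_bound V E f g" and v: "on_cycle V E v"
  shows "on_exactly_one_cycle V E v"
proof (rule ccontr)
  assume "\<not> on_exactly_one_cycle V E v"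
  then obtain w where "w \<in> V" "theta (V - {w}) (del_vert_rel E w) + 2 \<le> theta V E"
    using theta_drop_two_if_not_one_cycle[OF sg v] by blast
  then show False using attains_rank_lower_bound_theta_del_vert[OF sg f g eq] by fastforce
qed

lemma attains_rank_lower_bound_not_quasi_pendant:
  assumes sg: "simple_graph V E" and f: "supported_on V E f" and g: "supported_on V E g"
    and eq: "attains_rank_lower_bound V E f g" and v: "on_cycle V E v"
  shows "\<not> quasi_pendant E v"
proof
  assume "quasi_pendant E v"
  then obtain u where u: "E v u" "degree E u = 1" unfolding quasi_pendant_def by blast
  then obtain z where z: "{y. E u y} = {z}" unfolding degree_def by (metis card_1_singletonE)
  have N: "{y. E u y} = {v}" using z simple_graph_sym[OF sg u(1)] by auto
  have uV: "u \<in> V" using simple_graph_edge_in[OF sg u(1)] by blast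
  obtain cs where cs: "is_cycle V E cs" "v \<in> set cs" using v unfolding on_cycle_def by blast
  then have "on_cycle (V - {u}) (del_vert_rel E u) v"
    using is_cycle_del_vert[OF cs(1) pendant_not_on_cycle[OF sg cs(1) N]] unfolding on_cycle_def by blast
  then have "theta (V - {u} - {v}) (del_vert_rel (del_vert_rel E u) v) + 1 \<le> theta V E"
    using theta_del_vert_on_cycle[OF simple_graph_del_vert[OF sg]] theta_del_vert_le[OF sg uV]
    by fastforce
  moreover have "int (rank_on g (V - {u} - {v}) (V - {u} - {v}))
      - 2 * theta (V - {u} - {v}) (del_vert_rel (del_vert_rel E u) v)
      \<le> int (rank_on f (V - {u} - {v}) (V - {u} - {v}))"
    using simple_graph_del_vert[OF sg] supported_on_del_vert[OF f] supported_on_del_vert[OF g]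
    by (rule rank_on_lower_bound_del_vert)
  ultimately show False
    using rank_on_pendant_vertex[OF sg f N] rank_on_pendant_vertex[OF sg g N] eq
    unfolding attains_rank_lower_bound_def by linarith
qed

lemma attains_rank_lower_bound_cycle_vertex:
  assumes sg: "simple_graph V E" and f: "supported_on V E f" and g: "supported_on V E g"
    and eq: "attains_rank_lower_bound V E f g" and v: "on_cycle V E v"
  shows "theta V E = theta (V - {v}) (del_vert_rel E v) + 1"
    and "rank_on f V V = rank_on f (V - {v}) (V - {v})"
    and "rank_on g V V = rank_on g (V - {v}) (V - {v}) + 2"
    and "attains_rank_lower_bound (V - {v}) (del_vert_rel E v) f g"
    and "on_exactly_one_cycle V E v"
    and "\<not> quasi_pendant E v"
proof -
  obtain cs where "is_cycle V E cs" "v \<in> set cs" using v unfolding on_cycle_def by blast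
  then have "v \<in> V" using is_cycle_set_subset by blast
  note del = attains_rank_lower_bound_del_vert[OF sg f g eq this theta_del_vert_on_cycle[OF sg v]]
  show "theta V E = theta (V - {v}) (del_vert_rel E v) + 1"
    and "rank_on f V V = rank_on f (V - {v}) (V - {v})"
    and "rank_on g V V = rank_on g (V - {v}) (V - {v}) + 2"
    and "attains_rank_lower_bound (V - {v}) (del_vert_rel E v) f g"
    using del by blast+
  show "on_exactly_one_cycle V E v"
    by (rule attains_rank_lower_bound_on_exactly_one_cycle[OF sg f g eq v])
  show "\<not> quasi_pendant E v"
    by (rule attains_rank_lower_bound_not_quasi_pendant[OF sg f g eq v])
qed

theorem lemma4p1:
  fixes V :: "'a::linorder set" and E :: "'a \<Rightarrow> 'a \<Rightarrow> bool"
    and \<phi> :: "'a \<Rightarrow> 'a \<Rightarrow> complex" and v :: 'a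
  assumes "cu_gain_graph V E \<phi>"
    and "v \<in> V"
    and "on_cycle V E v"
  shows
   "(int (gain_rank V E \<phi>) = int (graph_rank V E) - 2 * theta V E \<longrightarrow>
       gain_rank V E \<phi> = gain_rank (del_vert_set V v) (del_vert_rel E v) \<phi>
     \<and> int (graph_rank (del_vert_set V v) (del_vert_rel E v)) = int (graph_rank V E) - 2
     \<and> theta V E = theta (del_vert_set V v) (del_vert_rel E v) + 1)
  \<and> (int (gain_rank V E \<phi>) = int (graph_rank V E) + 2 * theta V E \<longrightarrow>
       gain_rank V E \<phi> = gain_rank (del_vert_set V v) (del_vert_rel E v) \<phi> + 2
     \<and> graph_rank (del_vert_set V v) (del_vert_rel E v) = graph_rank V E
     \<and> theta V E = theta (del_vert_set V v) (del_vert_rel E v) + 1)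
  \<and> (int (gain_rank V E \<phi>) = int (graph_rank V E) - 2 * theta V E \<longrightarrow>
       int (gain_rank (del_vert_set V v) (del_vert_rel E v) \<phi>)
         = int (graph_rank (del_vert_set V v) (del_vert_rel E v))
           - 2 * theta (del_vert_set V v) (del_vert_rel E v)
     \<and> on_exactly_one_cycle V E v \<and> \<not> quasi_pendant E v)
  \<and> (int (gain_rank V E \<phi>) = int (graph_rank V E) + 2 * theta V E \<longrightarrow>
       int (gain_rank (del_vert_set V v) (del_vert_rel E v) \<phi>)
         = int (graph_rank (del_vert_set V v) (del_vert_rel E v))
           + 2 * theta (del_vert_set V v) (del_vert_rel E v)
     \<and> on_exactly_one_cycle V E v \<and> \<not> quasi_pendant E v)"
proof -
  have sg: "simple_graph V E" using assms(1) unfolding cu_gain_graph_def by blast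
  have fin: "finite V" using simple_graph_finite[OF sg] .
  note supp = supported_on_gain_entry[OF assms(1)] supported_on_adj_entry[of V E]
  let ?f = "gain_entry E \<phi>" and ?g = "adj_entry E"
  have lower: "int (rank_on ?f V V) = int (rank_on ?g V V) - 2 * theta V E
      \<longleftrightarrow> attains_rank_lower_bound V E ?f ?g"
    and upper: "int (rank_on ?f V V) = int (rank_on ?g V V) + 2 * theta V E
      \<longleftrightarrow> attains_rank_lower_bound V E ?g ?f"
    unfolding attains_rank_lower_bound_def by linarith+
  note L = attains_rank_lower_bound_cycle_vertex[OF sg supp(1) supp(2) _ assms(3)]
  note U = attains_rank_lower_bound_cycle_vertex[OF sg supp(2) supp(1) _ assms(3)]
  show ?thesis
    unfolding gain_rank_del_vert[OF fin] graph_rank_del_vert[OF fin]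
    unfolding gain_rank_eq_rank_on[OF fin] graph_rank_eq_rank_on[OF fin] del_vert_set_def lower upper
    using L(4) U(4) unfolding attains_rank_lower_bound_def[of "V - {v}"]
    by (intro conjI impI) (simp_all add: L U)
qed

end
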